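(* Every Hintikka formula $H$ of $\mathbf{L_1}$ satisfies $\dashv_H H$.
   Context: Formulas of $\mathbf{L_1}$: built from atomic formulas $\epsilon ab$ ($a,b$ name variables from a countably infinite list, possibly equal) with primitive connectives $\vee,\sim$; $\wedge,\supset,\equiv$ defined as usual. Disjunctions may be associated in any way. $\vdash_H A$: $A$ belongs to the smallest set containing all instances of classical propositional tautologies and all formulas $\epsilon ab\supset\epsilon aa$, $(\epsilon ab\wedge\epsilon bc)\supset\epsilon ac$, $(\epsilon ab\wedge\epsilon bb)\supset\epsilon ba$, closed under modus ponens. Positive/negative parts (occurrences): $A$ is a positive part of $A$; if $B\vee C$ is a positive part then $B,C$ are positive parts; if $\sim B$ is a positive part then $B$ is a negative part; if $\sim B$ is a negative part then $B$ is a positive part. $F[B_+,B_-]$ denotes a formula in which some formula $B$ has one occurrence as a positive part and another (non-overlapping) occurrence as a negative part. Hintikka formula: a formula $H$ such that (1) $H$ is not of the form $F[B_+,B_-]$; (2) if $B\vee C$ is a negative part of $H$ then $B$ or $C$ is; (3) if $\epsilon ab$ is a negative part then so is $\epsilon aa$; (4) if $\epsilon ab,\epsilon bc$ are negative parts then so is $\epsilon ac$; (5) if $\epsilon ab,\epsilon bb$ are negative parts then so is $\epsilon ba$. $\mathbf{HAR}$: fix a name variable $a_0$; $\dashv_H$ is the smallest set such that $\dashv_H\epsilon a_0a_0$; $\dashv_H\sim\epsilon a_0a_0$; if $\vdash_H A\supset B$ and $\dashv_H B$ then $\dashv_H A$; if $\dashv_H A$ and $A$ is obtained from $B$ by uniform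 substitution of name variables for name variables then $\dashv_H B$; if $A$ is a Hintikka formula that is a disjunction of atomic or negated atomic formulas, $\dashv_H A$, and $\epsilon ab$ is not a negative part of $A$, then $\dashv_H A\vee\epsilon ab$. *)

theory Defs
  imports Main "HOL-Library.Sublist"
begin

datatype fm = Eps nat nat | Or fm fm | Neg fm

definition And :: "fm \<Rightarrow> fm \<Rightarrow> fm" where
  "And A B = Neg (Or (Neg A) (Neg B))"
definition Imp :: "fm \<Rightarrow> fm \<Rightarrow> fm" where
  "Imp A B = Or (Neg A) B"

fun eval :: "(nat \<Rightarrow> nat \<Rightarrow> bool) \<Rightarrow> fm \<Rightarrow> bool" where
  "eval v (Eps a b) = v a b"
| "eval v (Or A B) = (eval v A \<or> eval v B)"
| "eval v (Neg A) = (\<not> eval v A)"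

text \<open>Instances of classical propositional tautologies.\<close>
definition taut :: "fm \<Rightarrow> bool" where
  "taut A \<longleftrightarrow> (\<forall>v. eval v A)"

inductive provable :: "fm \<Rightarrow> bool" where
  taut: "taut A \<Longrightarrow> provable A"
| ax1: "provable (Imp (Eps a b) (Eps a a))"
| ax2: "provable (Imp (And (Eps a b) (Eps b c)) (Eps a c))"
| ax3: "provable (Imp (And (Eps a b) (Eps b b)) (Eps b a))"
| mp: "provable (Imp A B) \<Longrightarrow> provable A \<Longrightarrow> provable B"

text \<open>part A s p B: the subformula occurrence of B at position p of A is a part
  of A with polarity s (True = positive, False = negative).\<close>
inductive part :: "fm \<Rightarrow> bool \<Rightarrow> nat list \<Rightarrow> fm \<Rightarrow> bool" where
  top: "part A True [] A"
| orL: "part A True p (Or B C) \<Longrightarrow> part A True (p @ [0]) B"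
| orR: "part A True p (Or B C) \<Longrightarrow> part A True (p @ [1]) C"
| neg: "part A s p (Neg B) \<Longrightarrow> part A (\<not> s) (p @ [0]) B"

definition negpart :: "fm \<Rightarrow> fm \<Rightarrow> bool" where
  "negpart A B \<longleftrightarrow> (\<exists>p. part A False p B)"

text \<open>A has the form F[B+,B-]: some B occurs as a positive part and, at a
  non-overlapping occurrence, as a negative part.\<close>
definition has_pos_neg :: "fm \<Rightarrow> bool" where
  "has_pos_neg A \<longleftrightarrow> (\<exists>B p q. part A True p B \<and> part A False q B
      \<and> \<not> prefix p q \<and> \<not> prefix q p)"

definition hintikka :: "fm \<Rightarrow> bool" where
  "hintikka H \<longleftrightarrow>
     \<not> has_pos_neg H
   \<and> (\<forall>B C. negpart H (Or B C) \<longrightarrow> negpart H B \<or> negpart H C)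
   \<and> (\<forall>a b. negpart H (Eps a b) \<longrightarrow> negpart H (Eps a a))
   \<and> (\<forall>a b c. negpart H (Eps a b) \<and> negpart H (Eps b c) \<longrightarrow> negpart H (Eps a c))
   \<and> (\<forall>a b. negpart H (Eps a b) \<and> negpart H (Eps b b) \<longrightarrow> negpart H (Eps b a))"

fun subst :: "(nat \<Rightarrow> nat) \<Rightarrow> fm \<Rightarrow> fm" where
  "subst \<sigma> (Eps a b) = Eps (\<sigma> a) (\<sigma> b)"
| "subst \<sigma> (Or A B) = Or (subst \<sigma> A) (subst \<sigma> B)"
| "subst \<sigma> (Neg A) = Neg (subst \<sigma> A)"

inductive litdisj :: "fm \<Rightarrow> bool" where
  atom: "litdisj (Eps a b)"
| negatom: "litdisj (Neg (Eps a b))"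
| disj: "litdisj A \<Longrightarrow> litdisj B \<Longrightarrow> litdisj (Or A B)"

inductive rejected :: "nat \<Rightarrow> fm \<Rightarrow> bool" for a0 :: nat where
  r1: "rejected a0 (Eps a0 a0)"
| r2: "rejected a0 (Neg (Eps a0 a0))"
| r_mp: "provable (Imp A B) \<Longrightarrow> rejected a0 B \<Longrightarrow> rejected a0 A"
| r_subst: "rejected a0 (subst \<sigma> B) \<Longrightarrow> rejected a0 B"
| r_ext: "hintikka A \<Longrightarrow> litdisj A \<Longrightarrow> rejected a0 A \<Longrightarrow> \<not> negpart A (Eps a b)
            \<Longrightarrow> rejected a0 (Or A (Eps a b))"

end

theory Submission
  imports Defs
begin

text \<open>A Hintikka formula H is falsified by the valuation that makes exactly its negative
  atomic parts true, and this valuation satisfies the three axioms. Rejection is complete for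
  such countermodels: restricted to the names of H, the valuation is described by the
  disjunction D of its false atoms and the negations of its true atoms. D is rejected by
  substituting a0 for every name in its negative literals and then adding the positive atoms
  one at a time (each intermediate disjunction is Hintikka because the true atoms are closed
  under the axioms), and H \<supset> D is a tautology, so H is rejected as well. If no atom over the
  names of H is true, substituting a0 for every name turns H into a formula implying \<epsilon>a0a0.\<close>

definition axiom_model :: "(nat \<Rightarrow> nat \<Rightarrow> bool) \<Rightarrow> bool" where
  "axiom_model v \<longleftrightarrow>
     (\<forall>a b. v a b \<longrightarrow> v a a)
   \<and> (\<forall>a b c. v a b \<and> v b c \<longrightarrow> v a c)
   \<and> (\<forall>a b. v a b \<and> v b b \<longrightarrow> v b a)"

lemma eval_Imp [simp]: "eval v (Imp A B) = (\<not> eval v A \<or> eval v B)"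
  by (simp add: Imp_def)

lemma eval_subst: "eval w (subst \<sigma> F) = eval (\<lambda>a b. w (\<sigma> a) (\<sigma> b)) F"
  by (induction F) auto

fun names :: "fm \<Rightarrow> nat list" where
  "names (Eps a b) = [a, b]"
| "names (Or A B) = names A @ names B"
| "names (Neg A) = names A"

lemma eval_cong_names:
  "(\<And>a b. a \<in> set (names F) \<Longrightarrow> b \<in> set (names F) \<Longrightarrow> w a b = v a b) \<Longrightarrow> eval w F = eval v F"
  by (induction F) auto

lemma rejected_if_taut_Imp: "taut (Imp A B) \<Longrightarrow> rejected a0 B \<Longrightarrow> rejected a0 A"
  by (rule rejected.r_mp[OF provable.taut])

fun subfm :: "fm \<Rightarrow> nat list \<Rightarrow> fm option" where
  "subfm A [] = Some A"
| "subfm (Or B C) (i # p) = (if i = 0 then subfm B p else if i = 1 then subfm C p else None)"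
| "subfm (Neg B) (i # p) = (if i = 0 then subfm B p else None)"
| "subfm (Eps a b) (i # p) = None"

lemma subfm_append: "subfm A (p @ q) = (case subfm A p of None \<Rightarrow> None | Some B \<Rightarrow> subfm B q)"
  by (induction A p rule: subfm.induct) auto

lemma part_subfm: "part H s p B \<Longrightarrow> subfm H p = Some B"
  by (induction rule: part.induct) (auto simp: subfm_append)

lemma part_Nil: "part A s p B \<Longrightarrow> p = [] \<Longrightarrow> s \<and> B = A"
  by (induction rule: part.induct) auto

lemma part_polarity_unique: "part H s p B \<Longrightarrow> part H s' p B' \<Longrightarrow> s = s'"
proof (induction arbitrary: s' B' rule: part.induct)
  case (top A)
  then show ?case by (auto dest: part_Nil)
next
  case (orL A p B C)
  from orL.prems show ?case
    by (cases rule: part.cases) (auto dest!: part_subfm simp: part_subfm[OF orL.hyps])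
next
  case (orR A p B C)
  from orR.prems show ?case
    by (cases rule: part.cases) (auto dest!: part_subfm simp: part_subfm[OF orR.hyps])
next
  case (neg A s p B)
  from neg.prems show ?case
    by (cases rule: part.cases) (use neg.IH in \<open>auto dest: part_subfm simp: part_subfm[OF neg.hyps]\<close>)
qed

lemma part_Eps_prefix_eq:
  assumes "part H s p (Eps a b)" "part H s' q (Eps a b)" "prefix p q"
  shows "p = q"
proof -
  from \<open>prefix p q\<close> obtain r where q: "q = p @ r" by (auto simp: prefix_def)
  with part_subfm[OF assms(1)] part_subfm[OF assms(2)] have "subfm (Eps a b) r = Some (Eps a b)"
    by (simp add: subfm_append)
  with q show ?thesis by (cases r) auto
qed

lemma hintikka_atom_not_pos_neg:
  assumes "hintikka H" "part H True p (Eps a b)" "part H False q (Eps a b)"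
  shows False
proof -
  from assms(1) have "\<not> has_pos_neg H" by (simp add: hintikka_def)
  with assms(2,3) have "prefix p q \<or> prefix q p" unfolding has_pos_neg_def by blast
  with assms(2,3) have "p = q" by (auto dest: part_Eps_prefix_eq)
  with part_polarity_unique assms(2,3) show False by blast
qed

lemma hintikka_parts_eval:
  assumes "hintikka H"
  shows "(part H True p F \<longrightarrow> \<not> eval (\<lambda>a b. negpart H (Eps a b)) F)
       \<and> (part H False p F \<longrightarrow> eval (\<lambda>a b. negpart H (Eps a b)) F)"
proof (induction F arbitrary: p)
  case (Eps a b)
  show ?case using hintikka_atom_not_pos_neg[OF assms] by (auto simp: negpart_def)
next
  case (Or B C)
  have "negpart H B \<or> negpart H C" if "part H False p (Or B C)"
    using that assms by (auto simp: hintikka_def negpart_def)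
  then show ?case using Or.IH part.orL part.orR by (fastforce simp: negpart_def)
next
  case (Neg B)
  show ?case using Neg.IH part.neg by fastforce
qed

lemma hintikka_countermodel: "hintikka H \<Longrightarrow> \<not> eval (\<lambda>a b. negpart H (Eps a b)) H"
  using hintikka_parts_eval part.top by blast

lemma hintikka_axiom_model: "hintikka H \<Longrightarrow> axiom_model (\<lambda>a b. negpart H (Eps a b))"
  unfolding hintikka_def axiom_model_def by blast

fun pos_atoms :: "fm \<Rightarrow> (nat \<times> nat) set" where
  "pos_atoms (Eps a b) = {(a, b)}"
| "pos_atoms (Or A B) = pos_atoms A \<union> pos_atoms B"
| "pos_atoms (Neg A) = {}"

fun neg_atoms :: "fm \<Rightarrow> (nat \<times> nat) set" where
  "neg_atoms (Eps a b) = {}"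
| "neg_atoms (Or A B) = neg_atoms A \<union> neg_atoms B"
| "neg_atoms (Neg A) = (case A of Eps a b \<Rightarrow> {(a, b)} | _ \<Rightarrow> {})"

lemma litdisj_part:
  "part X s p B \<Longrightarrow> litdisj X \<Longrightarrow>
     (s \<and> litdisj B \<and> pos_atoms B \<subseteq> pos_atoms X \<and> neg_atoms B \<subseteq> neg_atoms X)
   \<or> (\<not> s \<and> (\<exists>a b. B = Eps a b \<and> (a, b) \<in> neg_atoms X))"
proof (induction rule: part.induct)
  case (top A)
  then show ?case by auto
next
  case (orL A p B C)
  then show ?case by (auto elim: litdisj.cases)
next
  case (orR A p B C)
  then show ?case by (auto elim: litdisj.cases)
next
  case (neg A s p B)
  then show ?case by (auto elim: litdisj.cases)
qed

lemma litdisj_neg_atom_negpart: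
  "litdisj A \<Longrightarrow> part X True p A \<Longrightarrow> (a, b) \<in> neg_atoms A \<Longrightarrow> negpart X (Eps a b)"
proof (induction arbitrary: p rule: litdisj.induct)
  case (negatom c d)
  then show ?case using part.neg[OF negatom(1)] by (auto simp: negpart_def)
qed (auto intro: part.intros)

lemma litdisj_negpart_Eps_iff: "litdisj X \<Longrightarrow> negpart X (Eps a b) \<longleftrightarrow> (a, b) \<in> neg_atoms X"
  using litdisj_part litdisj_neg_atom_negpart[OF _ part.top] by (fastforce simp: negpart_def)

lemma litdisj_hintikka:
  assumes ld: "litdisj A" and disjoint: "neg_atoms A \<inter> pos_atoms A = {}"
    and model: "axiom_model (\<lambda>a b. (a, b) \<in> neg_atoms A)"
  shows "hintikka A"
proof -
  have "\<not> has_pos_neg A"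
  proof
    assume "has_pos_neg A"
    then obtain B p q where pos: "part A True p B" and neg: "part A False q B"
      unfolding has_pos_neg_def by blast
    from litdisj_part[OF neg ld] obtain a b where "B = Eps a b" "(a, b) \<in> neg_atoms A"
      by auto
    moreover from litdisj_part[OF pos ld] this have "(a, b) \<in> pos_atoms A"
      by auto
    ultimately show False using disjoint by auto
  qed
  moreover have "\<not> negpart A (Or B C)" for B C
    using litdisj_part[OF _ ld] by (fastforce simp: negpart_def)
  ultimately show ?thesis
    using model unfolding hintikka_def axiom_model_def litdisj_negpart_Eps_iff[OF ld] by blast
qed

text \<open>The value on the empty list is junk; it is only used for nonempty lists.\<close>
fun neg_disj :: "(nat \<times> nat) list \<Rightarrow> fm" where
  "neg_disj [] = Neg (Eps 0 0)"
| "neg_disj [(a, b)] = Neg (Eps a b)"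
| "neg_disj ((a, b) # x # xs) = Or (Neg (Eps a b)) (neg_disj (x # xs))"

lemma neg_disj_litdisj:
  "xs \<noteq> [] \<Longrightarrow> litdisj (neg_disj xs) \<and> neg_atoms (neg_disj xs) = set xs \<and> pos_atoms (neg_disj xs) = {}"
  by (induction xs rule: neg_disj.induct) (auto intro: litdisj.intros)

lemma eval_neg_disj: "xs \<noteq> [] \<Longrightarrow> eval w (neg_disj xs) \<longleftrightarrow> (\<exists>(a, b) \<in> set xs. \<not> w a b)"
  by (induction xs rule: neg_disj.induct) auto

text \<open>Left-nested, so that every step is an instance of the rule r_ext.\<close>
fun or_atoms :: "fm \<Rightarrow> (nat \<times> nat) list \<Rightarrow> fm" where
  "or_atoms A [] = A"
| "or_atoms A ((a, b) # xs) = or_atoms (Or A (Eps a b)) xs"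

lemma eval_or_atoms: "eval w (or_atoms A xs) \<longleftrightarrow> eval w A \<or> (\<exists>(a, b) \<in> set xs. w a b)"
  by (induction A xs rule: or_atoms.induct) auto

lemma rejected_neg_disj: "xs \<noteq> [] \<Longrightarrow> rejected a0 (neg_disj xs)"
proof -
  assume "xs \<noteq> []"
  then have "taut (Imp (subst (\<lambda>_. a0) (neg_disj xs)) (Neg (Eps a0 a0)))"
    by (auto simp: taut_def eval_subst eval_neg_disj)
  then show ?thesis
    using rejected_if_taut_Imp rejected.r2 rejected.r_subst by blast
qed

lemma rejected_or_atoms:
  assumes "litdisj A" "rejected a0 A" "axiom_model (\<lambda>a b. (a, b) \<in> neg_atoms A)"
    "neg_atoms A \<inter> pos_atoms A = {}" "neg_atoms A \<inter> set xs = {}"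
  shows "rejected a0 (or_atoms A xs)"
  using assms
proof (induction A xs rule: or_atoms.induct)
  case (2 A a b xs)
  have "\<not> negpart A (Eps a b)"
    using "2.prems"(1,5) litdisj_negpart_Eps_iff by auto
  then have "rejected a0 (Or A (Eps a b))"
    using rejected.r_ext litdisj_hintikka "2.prems" by blast
  with "2.prems" show ?case
    by (auto intro!: "2.IH" intro: litdisj.intros)
qed simp

definition diagram :: "(nat \<Rightarrow> nat \<Rightarrow> bool) \<Rightarrow> nat list \<Rightarrow> fm" where
  "diagram v ns =
     or_atoms (neg_disj (filter (\<lambda>(a, b). v a b) (List.product ns ns)))
              (filter (\<lambda>(a, b). \<not> v a b) (List.product ns ns))"

lemma diagram_false_iff:
  assumes "\<exists>a \<in> set ns. \<exists>b \<in> set ns. v a b"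
  shows "\<not> eval w (diagram v ns) \<longleftrightarrow> (\<forall>a \<in> set ns. \<forall>b \<in> set ns. w a b = v a b)"
proof -
  have "filter (\<lambda>(a, b). v a b) (List.product ns ns) \<noteq> []"
    using assms by (auto simp: filter_empty_conv)
  then show ?thesis
    unfolding diagram_def eval_or_atoms eval_neg_disj[OF \<open>_ \<noteq> []\<close>] by auto
qed

lemma rejected_diagram:
  assumes "axiom_model v" "\<exists>a \<in> set ns. \<exists>b \<in> set ns. v a b"
  shows "rejected a0 (diagram v ns)"
proof -
  define negs where "negs = filter (\<lambda>(a, b). v a b) (List.product ns ns)"
  define poss where "poss = filter (\<lambda>(a, b). \<not> v a b) (List.product ns ns)"
  have "negs \<noteq> []"
    using assms(2) by (auto simp: negs_def filter_empty_conv)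
  note negs = neg_disj_litdisj[OF this]
  have "axiom_model (\<lambda>a b. (a, b) \<in> set negs)"
    using assms(1) unfolding axiom_model_def negs_def set_filter set_product by blast
  then have "axiom_model (\<lambda>a b. (a, b) \<in> neg_atoms (neg_disj negs))"
    using negs by simp
  moreover have "set negs \<inter> set poss = {}"
    unfolding negs_def poss_def by auto
  ultimately have "rejected a0 (or_atoms (neg_disj negs) poss)"
    using rejected_or_atoms rejected_neg_disj[OF \<open>negs \<noteq> []\<close>] negs by simp
  then show ?thesis
    by (simp add: diagram_def negs_def poss_def)
qed

lemma rejected_if_all_false_countermodel:
  assumes "\<not> eval (\<lambda>_ _. False) H"
  shows "rejected a0 H"
proof -
  have "eval w (Imp (subst (\<lambda>_. a0) H) (Eps a0 a0))" for w
    using assms by (cases "w a0 a0") (simp_all add: eval_subst)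
  then have "taut (Imp (subst (\<lambda>_. a0) H) (Eps a0 a0))"
    unfolding taut_def by blast
  then show ?thesis
    using rejected_if_taut_Imp rejected.r1 rejected.r_subst by blast
qed

lemma rejected_if_countermodel:
  assumes "axiom_model v" "\<not> eval v H"
  shows "rejected a0 H"
proof (cases "\<exists>a \<in> set (names H). \<exists>b \<in> set (names H). v a b")
  case True
  have "eval w (diagram v (names H))" if "eval w H" for w
  proof (rule ccontr)
    assume "\<not> eval w (diagram v (names H))"
    then have "eval w H = eval v H"
      by (intro eval_cong_names) (simp add: diagram_false_iff[OF True])
    with that assms(2) show False by simp
  qed
  then have "taut (Imp H (diagram v (names H)))"
    unfolding taut_def by simp
  then show ?thesis
    using rejected_if_taut_Imp rejected_diagram[OF assms(1) True] by blast
next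
  case False
  then have "eval (\<lambda>_ _. False) H = eval v H"
    by (intro eval_cong_names) auto
  with assms(2) show ?thesis
    by (intro rejected_if_all_false_countermodel) simp
qed

theorem theorem3p1:
  fixes a0 :: nat and H :: fm
  assumes "hintikka H"
  shows "rejected a0 H"
  using rejected_if_countermodel hintikka_axiom_model[OF assms] hintikka_countermodel[OF assms]
  by blast

end
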